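(* Let $\pi \triangleright \Gamma \vdash^{(m,e)} t : L$ be a type derivation in the silly multi type system, with $L$ a linear type. (1) If $t \to_{wm} u$ then $m\geq 1$ and there is a derivation $\rho \triangleright \Gamma\vdash^{(m',e)} u : L$ with $m > m'$. (2) If $t\to_{we} u$ then $e\geq 1$ and there is a derivation $\rho\triangleright \Gamma\vdash^{(m,e')} u : L$ with $e>e'$. (3) If $t\to_{wgcv} u$ then there is a derivation $\rho\triangleright\Gamma\vdash^{(m,e)} u : L$ with $|\pi|>|\rho|$.
   Context: Terms: $t ::= x \mid \lambda x.t \mid t\,u \mid t[x\backslash u]$ ($t[x\backslash u]$ an explicit substitution binding $x$ in $t$; terms up to $\alpha$). Values $v ::= \lambda x.t$. Substitution contexts $S ::= \langle\cdot\rangle\mid S[x\backslash u]$. Weak contexts $W ::= \langle\cdot\rangle \mid W\,t \mid t\,W \mid t[x\backslash W] \mid W[x\backslash u]$; $W\langle\langle t\rangle\rangle$ is plugging without capture of free variables of $t$. Root rules: $S\langle\lambda x.t\rangle u\mapsto_m S\langle t[x\backslash u]\rangle$; $W\langle\langle x\rangle\rangle[x\backslash u]\mapsto_e W\langle\langle u\rangle\rangle[x\backslash u]$; $t[x\backslash S\langle v\rangle]\mapsto_{gcv} S\langle t\rangle$ if $x\notin\mathrm{fv}(t)$. $\to_{wm},\to_{we},\to_{wgcv}$ are their closures under weak contexts. Silly multi types: linear types $L ::= \mathtt{n} \mid M\multimap L$; multi types $M ::= [L_i]_{i\in I}$ finite multisets ($\mathbf{0}$ the empty one, $\uplus$ multiset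 sum). A type context $\Gamma$ maps variables to multi types, with finite domain $\{x\mid \Gamma(x)\neq\mathbf{0}\}$; $\uplus$ extends pointwise; $\Gamma\setminus\!\!\setminus x$ is $\Gamma$ with $x$ mapped to $\mathbf{0}$. Judgements $\Gamma\vdash^{(m,e)} t : T$ with $T$ linear or multi. Rules: (ax) $x:[L]\vdash^{(0,1)} x:L$; (many) from $(\Gamma_i\vdash^{(m_i,e_i)} t : L_i)_{i\in I}$, $I$ finite possibly empty, infer $\uplus_i\Gamma_i\vdash^{(\sum m_i,\sum e_i)} t : [L_i]_{i\in I}$; ($\mathrm{ax}_\lambda$) $\vdash^{(0,0)}\lambda x.t:\mathtt{n}$ with empty context; ($\lambda$) from $\Gamma\vdash^{(m,e)}t:L$ infer $\Gamma\setminus\!\!\setminus x\vdash^{(m,e)}\lambda x.t:\Gamma(x)\multimap L$; (@) from $\Gamma\vdash^{(m,e)} t : M\multimap L$ and $\Delta\vdash^{(m',e')} u : M\uplus[\mathtt{n}]$ infer $\Gamma\uplus\Delta\vdash^{(m+m'+1,e+e')} tu : L$; (ES) from $\Gamma\vdash^{(m,e)} t:L$ and $\Delta\vdash^{(m',e')}u:\Gamma(x)\uplus[\mathtt{n}]$ infer $(\Gamma\setminus\!\!\setminus x)\uplus\Delta\vdash^{(m+m',e+e')} t[x\backslash u]:L$. The size $|\pi|$ of a derivation is its number of rule instances other than (many). *)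

theory Defs
  imports Main "HOL-Library.Multiset"
begin

text \<open>Terms up to alpha-equivalence, represented with de Bruijn indices.
  Lam t binds index 0 in t; ES t u is the explicit substitution t[x\u],
  binding index 0 in t (not in u).\<close>

datatype trm = Var nat | Lam trm | App trm trm | ES trm trm

fun lift :: "nat \<Rightarrow> nat \<Rightarrow> trm \<Rightarrow> trm" where
  "lift k c (Var i) = Var (if i < c then i else i + k)"
| "lift k c (Lam t) = Lam (lift k (Suc c) t)"
| "lift k c (App t u) = App (lift k c t) (lift k c u)"
| "lift k c (ES t u) = ES (lift k (Suc c) t) (lift k c u)"

text \<open>lower c t decrements the free indices above c (used when c does not occur free).\<close>
fun lower :: "nat \<Rightarrow> trm \<Rightarrow> trm" where
  "lower c (Var i) = Var (if i < c then i else i - 1)"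
| "lower c (Lam t) = Lam (lower (Suc c) t)"
| "lower c (App t u) = App (lower c t) (lower c u)"
| "lower c (ES t u) = ES (lower (Suc c) t) (lower c u)"

fun occurs_free :: "nat \<Rightarrow> trm \<Rightarrow> bool" where
  "occurs_free c (Var i) = (i = c)"
| "occurs_free c (Lam t) = occurs_free (Suc c) t"
| "occurs_free c (App t u) = (occurs_free c t \<or> occurs_free c u)"
| "occurs_free c (ES t u) = (occurs_free (Suc c) t \<or> occurs_free c u)"

fun is_value :: "trm \<Rightarrow> bool" where
  "is_value (Lam t) = True"
| "is_value _ = False"

text \<open>Substitution contexts: S = <.>[x1\u1]...[xn\un], represented by the list
  [un, ..., u1] (outermost substitution first).\<close>
fun plugS :: "trm list \<Rightarrow> trm \<Rightarrow> trm" where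
  "plugS [] t = t"
| "plugS (u # us) t = ES (plugS us t) u"

datatype wctx = Hole | AppL wctx trm | AppR trm wctx | ESR trm wctx | ESL wctx trm

fun plugW :: "wctx \<Rightarrow> trm \<Rightarrow> trm" where
  "plugW Hole t = t"
| "plugW (AppL W u) t = App (plugW W t) u"
| "plugW (AppR u W) t = App u (plugW W t)"
| "plugW (ESR u W) t = ES u (plugW W t)"
| "plugW (ESL W u) t = ES (plugW W t) u"

fun depthW :: "wctx \<Rightarrow> nat" where
  "depthW Hole = 0"
| "depthW (AppL W u) = depthW W"
| "depthW (AppR u W) = depthW W"
| "depthW (ESR u W) = depthW W"
| "depthW (ESL W u) = Suc (depthW W)"

inductive root_m :: "trm \<Rightarrow> trm \<Rightarrow> bool" where
  "root_m (App (plugS S (Lam t)) u) (plugS S (ES t (lift (length S) 0 u)))"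

text \<open>W<<x>>[x\u] -> W<<u>>[x\u]: the variable bound by the outer ES sits at index
  depthW W inside the hole; u must be lifted over the ES binder and the binders of W.\<close>
inductive root_e :: "trm \<Rightarrow> trm \<Rightarrow> bool" where
  "root_e (ES (plugW W (Var (depthW W))) u) (ES (plugW W (lift (Suc (depthW W)) 0 u)) u)"

inductive root_gcv :: "trm \<Rightarrow> trm \<Rightarrow> bool" where
  "\<not> occurs_free 0 t \<Longrightarrow> is_value v \<Longrightarrow>
   root_gcv (ES t (plugS S v)) (plugS S (lift (length S) 0 (lower 0 t)))"

inductive wm :: "trm \<Rightarrow> trm \<Rightarrow> bool" where
  "root_m t u \<Longrightarrow> wm (plugW W t) (plugW W u)"

inductive we :: "trm \<Rightarrow> trm \<Rightarrow> bool" where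
  "root_e t u \<Longrightarrow> we (plugW W t) (plugW W u)"

inductive wgcv :: "trm \<Rightarrow> trm \<Rightarrow> bool" where
  "root_gcv t u \<Longrightarrow> wgcv (plugW W t) (plugW W u)"

datatype lty = N | Arr "lty multiset" lty

type_synonym ctx = "nat \<Rightarrow> lty multiset"

definition ctx_empty :: ctx where "ctx_empty = (\<lambda>_. {#})"
definition ctx_single :: "nat \<Rightarrow> lty \<Rightarrow> ctx" where
  "ctx_single x L = (\<lambda>i. if i = x then {#L#} else {#})"
definition ctx_sum :: "ctx \<Rightarrow> ctx \<Rightarrow> ctx" where
  "ctx_sum G D = (\<lambda>i. G i + D i)"
definition ctx_tail :: "ctx \<Rightarrow> ctx" where
  "ctx_tail G = (\<lambda>i. G (Suc i))"

text \<open>typed G t L m e s: there is a derivation of G |-(m,e) t : L of size s;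
  mtyped G t M m e s: the same for multi types (rule many), where the size
  counts all rule instances other than (many).\<close>
inductive typed :: "ctx \<Rightarrow> trm \<Rightarrow> lty \<Rightarrow> nat \<Rightarrow> nat \<Rightarrow> nat \<Rightarrow> bool"
  and mtyped :: "ctx \<Rightarrow> trm \<Rightarrow> lty multiset \<Rightarrow> nat \<Rightarrow> nat \<Rightarrow> nat \<Rightarrow> bool" where
  ax: "typed (ctx_single x L) (Var x) L 0 1 1"
| ax_lam: "typed ctx_empty (Lam t) N 0 0 1"
| lam: "typed G t L m e s \<Longrightarrow> typed (ctx_tail G) (Lam t) (Arr (G 0) L) m e (Suc s)"
| app: "typed G t (Arr M L) m e s \<Longrightarrow> mtyped D u (M + {#N#}) m' e' s' \<Longrightarrow>
        typed (ctx_sum G D) (App t u) L (m + m' + 1) (e + e') (s + s' + 1)"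
| es: "typed G t L m e s \<Longrightarrow> mtyped D u (G 0 + {#N#}) m' e' s' \<Longrightarrow>
        typed (ctx_sum (ctx_tail G) D) (ES t u) L (m + m') (e + e') (s + s' + 1)"
| many_empty: "mtyped ctx_empty t {#} 0 0 0"
| many_add: "typed G t L m e s \<Longrightarrow> mtyped D t M m' e' s' \<Longrightarrow>
        mtyped (ctx_sum G D) t (add_mset L M) (m + m') (e + e') (s + s')"

end

theory Submission
  imports Defs
begin

text \<open>Each root rule is simulated by surgery on the derivation. For \<open>\<rightarrow>m\<close>, the (\<open>\<lambda>\<close>) rule
  below the substitution context and the (@) rule are traded for one (ES) rule, so one application
  disappears. For \<open>\<rightarrow>e\<close>, the hole variable \<open>x\<close> of \<open>W\<langle>\<langle>x\<rangle>\<rangle>\<close> is typed by axioms whose types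
  form a nonempty multiset \<open>X\<close> (one axiom per copy of the hole in the derivation); the argument
  of the substitution has type \<open>\<Gamma>(x) \<uplus> [n]\<close>, which contains \<open>X\<close>, so it splits off derivations
  of \<open>u : X\<close> that replace these \<open>|X| \<ge> 1\<close> axioms. For \<open>\<rightarrow>gcv\<close>, the erased variable has empty
  type, so the value is typed by \<open>[n]\<close> alone, i.e. by one (\<open>ax\<^sub>\<lambda>\<close>) rule, which vanishes with
  the (ES) rule.

  All counters are additive over the rules, and (@) and (ES) type every argument with a multiset
  containing \<open>n\<close>: a step inside an argument is replayed in at least one copy, so the strict
  decrease survives the closure under weak contexts.\<close>

section \<open>Typing contexts\<close>

definition ctx_shift :: "nat \<Rightarrow> nat \<Rightarrow> ctx \<Rightarrow> ctx" where
  "ctx_shift k c G = (\<lambda>i. if i < c then G i else if i < c + k then {#} else G (i - k))"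

definition ctx_lower :: "nat \<Rightarrow> ctx \<Rightarrow> ctx" where
  "ctx_lower c G = (\<lambda>i. if i < c then G i else G (Suc i))"

definition ctx_at :: "nat \<Rightarrow> lty multiset \<Rightarrow> ctx" where
  "ctx_at c M = (\<lambda>i. if i = c then M else {#})"

lemmas ctx_defs = ctx_sum_def ctx_empty_def ctx_single_def ctx_tail_def
  ctx_shift_def ctx_lower_def ctx_at_def

lemma ctx_sum_apply: "ctx_sum G D i = G i + D i"
  by (simp add: ctx_sum_def)

lemma ctx_sum_empty [simp]: "ctx_sum G ctx_empty = G" "ctx_sum ctx_empty G = G"
  by (simp_all add: ctx_defs)

lemma ctx_sum_assoc: "ctx_sum (ctx_sum G D) E = ctx_sum G (ctx_sum D E)"
  and ctx_sum_commute: "ctx_sum G D = ctx_sum D G"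
  and ctx_sum_left_commute: "ctx_sum G (ctx_sum D E) = ctx_sum D (ctx_sum G E)"
  by (auto simp: ctx_defs add_ac)

lemmas ctx_sum_ac = ctx_sum_assoc ctx_sum_commute ctx_sum_left_commute

lemma ctx_tail_sum: "ctx_tail (ctx_sum G D) = ctx_sum (ctx_tail G) (ctx_tail D)"
  by (simp add: ctx_defs)

lemma ctx_at_empty: "ctx_at c {#} = ctx_empty"
  and ctx_at_single: "ctx_at c {#L#} = ctx_single c L"
  and ctx_at_sum: "ctx_at c (A + B) = ctx_sum (ctx_at c A) (ctx_at c B)"
  and ctx_tail_at: "ctx_tail (ctx_at (Suc c) M) = ctx_at c M"
  and ctx_at_Suc_0: "ctx_at (Suc c) M 0 = {#}"
  and ctx_tail_at_0: "ctx_tail (ctx_at 0 M) = ctx_empty"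
  by (auto simp: ctx_defs)

lemma ctx_shift_single: "ctx_shift k c (ctx_single x L) = ctx_single (if x < c then x else x + k) L"
  and ctx_shift_empty: "ctx_shift k c ctx_empty = ctx_empty"
  and ctx_shift_sum: "ctx_shift k c (ctx_sum G D) = ctx_sum (ctx_shift k c G) (ctx_shift k c D)"
  and ctx_tail_shift: "ctx_tail (ctx_shift k (Suc c) G) = ctx_shift k c (ctx_tail G)"
  and ctx_shift_Suc_0: "ctx_shift k (Suc c) G 0 = G 0"
  by (auto simp: ctx_defs Suc_diff_le intro!: ext)

text \<open>Both spellings of the shift by one arise after simplification.\<close>

lemma ctx_shift_1_0: "ctx_shift 1 0 G 0 = {#}" "ctx_shift (Suc 0) 0 G 0 = {#}"
  and ctx_tail_shift_1: "ctx_tail (ctx_shift 1 0 G) = G" "ctx_tail (ctx_shift (Suc 0) 0 G) = G"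
  by (auto simp: ctx_defs intro!: ext)

lemma ctx_lower_single: "x \<noteq> c \<Longrightarrow> ctx_lower c (ctx_single x L) = ctx_single (if x < c then x else x - 1) L"
  and ctx_lower_empty: "ctx_lower c ctx_empty = ctx_empty"
  and ctx_lower_sum: "ctx_lower c (ctx_sum G D) = ctx_sum (ctx_lower c G) (ctx_lower c D)"
  and ctx_tail_lower: "ctx_tail (ctx_lower (Suc c) G) = ctx_lower c (ctx_tail G)"
  and ctx_lower_Suc_0: "ctx_lower (Suc c) G 0 = G 0"
  and ctx_lower_0: "ctx_lower 0 G = ctx_tail G"
  by (auto simp: ctx_defs intro!: ext)

section \<open>Derivations\<close>

lemma lift_0 [simp]: "lift 0 c t = t"
  by (induction t arbitrary: c) auto

lemma lift_lift: "lift a c (lift b c t) = lift (a + b) c t"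
  by (induction t arbitrary: c) auto

lemma typed_cong: "typed G t L m e s \<Longrightarrow> G = G' \<Longrightarrow> m = m' \<Longrightarrow> e = e' \<Longrightarrow> s = s' \<Longrightarrow> typed G' t L m' e' s'"
  and mtyped_cong: "mtyped G t M m e s \<Longrightarrow> G = G' \<Longrightarrow> m = m' \<Longrightarrow> e = e' \<Longrightarrow> s = s' \<Longrightarrow> mtyped G' t M m' e' s'"
  by simp_all

lemmas typed_axioms = typed_mtyped.ax[unfolded One_nat_def] typed_mtyped.ax_lam[unfolded One_nat_def]

inductive_cases typed_VarE: "typed G (Var x) L m e s"
inductive_cases typed_LamE: "typed G (Lam t) L m e s"
inductive_cases typed_AppE: "typed G (App t u) L m e s"
inductive_cases typed_ESE: "typed G (ES t u) L m e s"
inductive_cases mtyped_emptyE: "mtyped G t {#} m e s"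

lemma mtyped_induct [consumes 1, case_names empty add]:
  assumes "mtyped D t M m e s"
    and "P ctx_empty {#} 0 0 0"
    and "\<And>G L m e s D M m' e' s'. typed G t L m e s \<Longrightarrow> mtyped D t M m' e' s' \<Longrightarrow> P D M m' e' s' \<Longrightarrow>
           P (ctx_sum G D) (add_mset L M) (m + m') (e + e') (s + s')"
  shows "P D M m e s"
  using typed_mtyped.inducts(2)[where ?P1.0 = "\<lambda>_ _ _ _ _ _. True"
      and ?P2.0 = "\<lambda>D u M m e s. u = t \<longrightarrow> P D M m e s", OF assms(1)] assms(2,3)
  by blast

lemma mtyped_empty_iff: "mtyped G t {#} m e s \<longleftrightarrow> G = ctx_empty \<and> m = 0 \<and> e = 0 \<and> s = 0"
  by (auto elim: mtyped_emptyE intro: many_empty)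

lemma mtyped_single_iff: "mtyped D u {#L#} m e s \<longleftrightarrow> typed D u L m e s"
  by (auto elim: mtyped.cases simp: mtyped_empty_iff dest: many_add[OF _ many_empty])

lemma mtyped_add:
  assumes "mtyped D1 u M1 m1 e1 s1" "mtyped D2 u M2 m2 e2 s2"
  shows "mtyped (ctx_sum D1 D2) u (M1 + M2) (m1 + m2) (e1 + e2) (s1 + s2)"
  using assms
proof (induction rule: mtyped_induct)
  case (add G L m e s D M m' e' s')
  from many_add[OF add.hyps(1) add.IH[OF add.prems]] show ?case
    by (auto simp: ctx_sum_assoc add_ac elim: mtyped_cong)
qed simp

lemma mtyped_split:
  assumes "mtyped D u (M1 + M2) m e s"
  obtains D1 D2 m1 m2 e1 e2 s1 s2 where "mtyped D1 u M1 m1 e1 s1" "mtyped D2 u M2 m2 e2 s2"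
    "D = ctx_sum D1 D2" "m = m1 + m2" "e = e1 + e2" "s = s1 + s2"
proof -
  have "\<exists>D1 D2 m1 m2 e1 e2 s1 s2. mtyped D1 u M1 m1 e1 s1 \<and> mtyped D2 u M2 m2 e2 s2 \<and>
          D = ctx_sum D1 D2 \<and> m = m1 + m2 \<and> e = e1 + e2 \<and> s = s1 + s2"
    if "mtyped D u M m e s" "M = M1 + M2" for D M m e s M1 M2
    using that
  proof (induction arbitrary: M1 M2 rule: mtyped_induct)
    case empty
    then show ?case by (auto simp: mtyped_empty_iff)
  next
    case (add G L m e s D M m' e' s')
    have split_off: "\<exists>D1 D2 m1 m2 e1 e2 s1 s2. mtyped D1 u A m1 e1 s1 \<and> mtyped D2 u B m2 e2 s2 \<and>
          ctx_sum G D = ctx_sum D1 D2 \<and> m + m' = m1 + m2 \<and> e + e' = e1 + e2 \<and> s + s' = s1 + s2"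
      if "add_mset L M = A + B" "L \<in># A" for A B
    proof -
      obtain A' where A: "A = add_mset L A'"
        using \<open>L \<in># A\<close> by (metis multi_member_split)
      with that have "M = A' + B" by simp
      with add.IH obtain D1 D2 m1 m2 e1 e2 s1 s2 where
        IH: "mtyped D1 u A' m1 e1 s1" "mtyped D2 u B m2 e2 s2"
          "D = ctx_sum D1 D2" "m' = m1 + m2" "e' = e1 + e2" "s' = s1 + s2"
        by blast
      from many_add[OF add.hyps(1) IH(1)] IH(2-) A show ?thesis
        by (force simp: ctx_sum_assoc add.assoc)
    qed
    from add.prems have "L \<in># M1 \<or> L \<in># M2"
      by (metis union_iff union_single_eq_member)
    then show ?case
    proof
      assume "L \<in># M2"
      with split_off[of M2 M1] add.prems show ?case
        by (metis add.commute ctx_sum_commute)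
    qed (use split_off add.prems in blast)
  qed
  from this[OF assms refl] that show thesis by blast
qed

lemma typed_lift:
  shows "typed G t L m e s \<Longrightarrow> typed (ctx_shift k c G) (lift k c t) L m e s"
    and "mtyped G t M m e s \<Longrightarrow> mtyped (ctx_shift k c G) (lift k c t) M m e s"
proof (induction arbitrary: c and c rule: typed_mtyped.inducts)
  case (ax x L)
  show ?case by (simp add: ctx_shift_single typed_axioms)
next
  case (ax_lam t)
  show ?case by (simp add: ctx_shift_empty typed_axioms)
next
  case (lam G t L m e s)
  from typed_mtyped.lam[OF lam.IH[of "Suc c"]] show ?case
    by (simp add: ctx_tail_shift ctx_shift_Suc_0)
next
  case (app G t M L m e s D u m' e' s')
  from typed_mtyped.app[OF app.IH] show ?case
    by (simp add: ctx_shift_sum)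
next
  case (es G t L m e s D u m' e' s')
  from typed_mtyped.es[OF es.IH(1)[of "Suc c"], of "ctx_shift k c D"] es.IH(2)[of c] show ?case
    by (simp add: ctx_shift_sum ctx_tail_shift ctx_shift_Suc_0)
next
  case (many_empty t)
  show ?case by (simp add: ctx_shift_empty typed_mtyped.many_empty)
next
  case (many_add G t L m e s D M m' e' s')
  from typed_mtyped.many_add[OF many_add.IH] show ?case
    by (simp add: ctx_shift_sum)
qed

lemma typed_ctx_not_free:
  shows "typed G t L m e s \<Longrightarrow> \<not> occurs_free c t \<Longrightarrow> G c = {#}"
    and "mtyped G t M m e s \<Longrightarrow> \<not> occurs_free c t \<Longrightarrow> G c = {#}"
  by (induction arbitrary: c and c rule: typed_mtyped.inducts) (auto simp: ctx_defs)

lemma typed_lower: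
  shows "typed G t L m e s \<Longrightarrow> \<not> occurs_free c t \<Longrightarrow> typed (ctx_lower c G) (lower c t) L m e s"
    and "mtyped G t M m e s \<Longrightarrow> \<not> occurs_free c t \<Longrightarrow> mtyped (ctx_lower c G) (lower c t) M m e s"
proof (induction arbitrary: c and c rule: typed_mtyped.inducts)
  case (ax x L)
  then show ?case by (simp add: ctx_lower_single typed_axioms)
next
  case (ax_lam t)
  show ?case by (simp add: ctx_lower_empty typed_axioms)
next
  case (lam G t L m e s)
  from lam.prems typed_mtyped.lam[OF lam.IH[of "Suc c"]] show ?case
    by (simp add: ctx_tail_lower ctx_lower_Suc_0)
next
  case (app G t M L m e s D u m' e' s')
  from app.prems typed_mtyped.app[OF app.IH] show ?case
    by (simp add: ctx_lower_sum)
next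
  case (es G t L m e s D u m' e' s')
  from es.prems typed_mtyped.es[OF es.IH(1)[of "Suc c"], of "ctx_lower c D"] es.IH(2)[of c] show ?case
    by (simp add: ctx_lower_sum ctx_tail_lower ctx_lower_Suc_0)
next
  case (many_empty t)
  show ?case by (simp add: ctx_lower_empty typed_mtyped.many_empty)
next
  case (many_add G t L m e s D M m' e' s')
  from many_add.prems typed_mtyped.many_add[OF many_add.IH] show ?case
    by (simp add: ctx_lower_sum)
qed

section \<open>Substitution contexts\<close>

lemma typed_plugS_distant_beta:
  assumes "typed G (plugS S (Lam t)) (Arr M L) m e s" "mtyped D u (M + {#N#}) m' e' s'"
  shows "\<exists>s''. typed (ctx_sum G D) (plugS S (ES t (lift (length S) 0 u))) L (m + m') (e + e') s''"
  using assms
proof (induction S arbitrary: G m e s D u)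
  case Nil
  then obtain G1 where "G = ctx_tail G1" "M = G1 0" "typed G1 t L m e (s - 1)"
    by (auto elim: typed_LamE)
  with typed_mtyped.es[OF this(3), of D u] Nil.prems(2) show ?case by auto
next
  case (Cons v S)
  from Cons.prems(1) obtain G1 D1 m1 e1 s1 m2 e2 s2 where
    G: "G = ctx_sum (ctx_tail G1) D1" "m = m1 + m2" "e = e1 + e2"
    and fun_typed: "typed G1 (plugS S (Lam t)) (Arr M L) m1 e1 s1"
    and v_typed: "mtyped D1 v (G1 0 + {#N#}) m2 e2 s2"
    by (auto elim: typed_ESE)
  from Cons.IH[OF fun_typed typed_lift(2)[OF Cons.prems(2), of 1 0]] obtain s'' where
    "typed (ctx_sum G1 (ctx_shift 1 0 D)) (plugS S (ES t (lift (length S) 0 (lift 1 0 u)))) L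
       (m1 + m') (e1 + e') s''" ..
  moreover from v_typed have "mtyped D1 v (ctx_sum G1 (ctx_shift 1 0 D) 0 + {#N#}) m2 e2 s2"
    by (simp add: ctx_sum_apply ctx_shift_1_0)
  ultimately show ?case
    using typed_mtyped.es G by (fastforce simp: ctx_tail_sum ctx_tail_shift_1 lift_lift ctx_sum_ac add_ac)
qed

lemma typed_plugS_value_gc:
  assumes "typed D (plugS S (Lam t)) N m' e' s'" "typed G r L m e s"
  shows "\<exists>s''. typed (ctx_sum G D) (plugS S (lift (length S) 0 r)) L (m + m') (e + e') s'' \<and> s'' < s + s'"
  using assms
proof (induction S arbitrary: D m' e' s' G r)
  case Nil
  then have "D = ctx_empty" "m' = 0" "e' = 0" "s' = 1"
    by (auto elim: typed_LamE)
  with Nil.prems(2) show ?case by auto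
next
  case (Cons v S)
  from Cons.prems(1) obtain D1 D2 m1 e1 s1 m2 e2 s2 where
    D: "D = ctx_sum (ctx_tail D1) D2" "m' = m1 + m2" "e' = e1 + e2" "s' = s1 + s2 + 1"
    and value_typed: "typed D1 (plugS S (Lam t)) N m1 e1 s1"
    and v_typed: "mtyped D2 v (D1 0 + {#N#}) m2 e2 s2"
    by (auto elim: typed_ESE)
  from Cons.IH[OF value_typed typed_lift(1)[OF Cons.prems(2), of 1 0]] obtain s'' where
    "typed (ctx_sum (ctx_shift 1 0 G) D1) (plugS S (lift (length S) 0 (lift 1 0 r))) L (m + m1) (e + e1) s''"
    "s'' < s + s1"
    by blast
  moreover from v_typed have "mtyped D2 v (ctx_sum (ctx_shift 1 0 G) D1 0 + {#N#}) m2 e2 s2"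
    by (simp add: ctx_sum_apply ctx_shift_1_0)
  ultimately show ?case
    using typed_mtyped.es D by (fastforce simp: ctx_tail_sum ctx_tail_shift_1 lift_lift ctx_sum_ac add_ac)
qed

section \<open>Linear substitution\<close>

text \<open>\<open>linear_subst F c G M m e\<close> abstracts a derivation of \<open>G \<turnstile>(m,e) F x\<^sub>c : M\<close>, where \<open>F\<close>
  marks some occurrences of the variable \<open>c\<close>: the axioms typing them carry the types \<open>X\<close>, and
  replacing the marked occurrences by any \<open>r : X\<close> yields a derivation of \<open>F r\<close> without these
  \<open>|X|\<close> axioms.\<close>

definition linear_subst :: "(trm \<Rightarrow> trm) \<Rightarrow> nat \<Rightarrow> ctx \<Rightarrow> lty multiset \<Rightarrow> nat \<Rightarrow> nat \<Rightarrow> bool" where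
  "linear_subst F c G M m e \<longleftrightarrow>
    (\<exists>X G' e'. (M \<noteq> {#} \<longrightarrow> X \<noteq> {#}) \<and> G = ctx_sum G' (ctx_at c X) \<and> e = e' + size X \<and>
      (\<forall>H r mr er sr. mtyped H r X mr er sr \<longrightarrow> (\<exists>s. mtyped (ctx_sum G' H) (F r) M (m + mr) (e' + er) s)))"

lemma linear_substI:
  assumes "M \<noteq> {#} \<Longrightarrow> X \<noteq> {#}" "G = ctx_sum G' (ctx_at c X)" "e = e' + size X"
    and "\<And>H r mr er sr. mtyped H r X mr er sr \<Longrightarrow> \<exists>s. mtyped (ctx_sum G' H) (F r) M (m + mr) (e' + er) s"
  shows "linear_subst F c G M m e"
  using assms unfolding linear_subst_def by blast

lemma linear_subst_nonemptyE:
  assumes "linear_subst F c G M m e" "M \<noteq> {#}"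
  obtains X G' e' where "X \<noteq> {#}" "G = ctx_sum G' (ctx_at c X)" "e = e' + size X"
    "\<And>H r mr er sr. mtyped H r X mr er sr \<Longrightarrow> \<exists>s. mtyped (ctx_sum G' H) (F r) M (m + mr) (e' + er) s"
  using assms unfolding linear_subst_def by blast

lemma linear_subst_empty: "linear_subst F c ctx_empty {#} 0 0"
  by (rule linear_substI[where X = "{#}" and G' = ctx_empty and e' = 0])
    (auto simp: ctx_at_empty mtyped_empty_iff intro: many_empty)

lemma linear_subst_add:
  assumes "linear_subst F c G1 M1 m1 e1" "linear_subst F c G2 M2 m2 e2"
  shows "linear_subst F c (ctx_sum G1 G2) (M1 + M2) (m1 + m2) (e1 + e2)"
proof -
  from assms(1) obtain X1 G1' e1' where X1: "M1 \<noteq> {#} \<Longrightarrow> X1 \<noteq> {#}" "G1 = ctx_sum G1' (ctx_at c X1)"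
      "e1 = e1' + size X1"
    and subst1: "\<And>H r mr er sr. mtyped H r X1 mr er sr \<Longrightarrow>
      \<exists>s. mtyped (ctx_sum G1' H) (F r) M1 (m1 + mr) (e1' + er) s"
    unfolding linear_subst_def by blast
  from assms(2) obtain X2 G2' e2' where X2: "M2 \<noteq> {#} \<Longrightarrow> X2 \<noteq> {#}" "G2 = ctx_sum G2' (ctx_at c X2)"
      "e2 = e2' + size X2"
    and subst2: "\<And>H r mr er sr. mtyped H r X2 mr er sr \<Longrightarrow>
      \<exists>s. mtyped (ctx_sum G2' H) (F r) M2 (m2 + mr) (e2' + er) s"
    unfolding linear_subst_def by blast
  show ?thesis
  proof (rule linear_substI[where X = "X1 + X2" and G' = "ctx_sum G1' G2'" and e' = "e1' + e2'"])
    show "M1 + M2 \<noteq> {#} \<Longrightarrow> X1 + X2 \<noteq> {#}" using X1(1) X2(1) by auto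
    show "ctx_sum G1 G2 = ctx_sum (ctx_sum G1' G2') (ctx_at c (X1 + X2))"
      using X1(2) X2(2) by (simp add: ctx_at_sum ctx_sum_ac)
    show "e1 + e2 = e1' + e2' + size (X1 + X2)" using X1(3) X2(3) by simp
  next
    fix H r mr er sr
    assume "mtyped H r (X1 + X2) mr er sr"
    then obtain H1 H2 mr1 mr2 er1 er2 sr1 sr2 where
      "mtyped H1 r X1 mr1 er1 sr1" "mtyped H2 r X2 mr2 er2 sr2"
      and H: "H = ctx_sum H1 H2" "mr = mr1 + mr2" "er = er1 + er2"
      by (rule mtyped_split)
    with subst1 subst2 obtain s1 s2 where
      "mtyped (ctx_sum G1' H1) (F r) M1 (m1 + mr1) (e1' + er1) s1"
      "mtyped (ctx_sum G2' H2) (F r) M2 (m2 + mr2) (e2' + er2) s2"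
      by blast
    from mtyped_add[OF this] H
    show "\<exists>s. mtyped (ctx_sum (ctx_sum G1' G2') H) (F r) (M1 + M2) (m1 + m2 + mr) (e1' + e2' + er) s"
      by (auto simp: ctx_sum_ac add_ac elim: mtyped_cong)
  qed
qed

lemma linear_subst_mtyped:
  assumes "mtyped G t M m e s"
    and "\<And>G L m e s. typed G t L m e s \<Longrightarrow> linear_subst F c G {#L#} m e"
  shows "linear_subst F c G M m e"
  using assms(1)
proof (induction rule: mtyped_induct)
  case empty
  show ?case by (rule linear_subst_empty)
next
  case (add G L m e s D M m' e' s')
  from linear_subst_add[OF assms(2)[OF add.hyps(1)] add.IH] show ?case by simp
qed

lemma linear_subst_App_left:
  assumes "linear_subst F c G {#Arr M L#} m e" "mtyped D u (M + {#N#}) m' e' s'"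
  shows "linear_subst (\<lambda>r. App (F r) u) c (ctx_sum G D) {#L#} (m + m' + 1) (e + e')"
proof -
  from assms(1) obtain X G' e0 where X: "X \<noteq> {#}" "G = ctx_sum G' (ctx_at c X)" "e = e0 + size X"
    and subst: "\<And>H r mr er sr. mtyped H r X mr er sr \<Longrightarrow>
      \<exists>s. mtyped (ctx_sum G' H) (F r) {#Arr M L#} (m + mr) (e0 + er) s"
    by (elim linear_subst_nonemptyE) simp_all
  show ?thesis
  proof (rule linear_substI[where X = X and G' = "ctx_sum G' D" and e' = "e0 + e'"])
    fix H r mr er sr
    assume "mtyped H r X mr er sr"
    from subst[OF this] obtain s where "typed (ctx_sum G' H) (F r) (Arr M L) (m + mr) (e0 + er) s"
      by (auto simp: mtyped_single_iff)
    from app[OF this assms(2)]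
    show "\<exists>s. mtyped (ctx_sum (ctx_sum G' D) H) (App (F r) u) {#L#} (m + m' + 1 + mr) (e0 + e' + er) s"
      by (auto simp: mtyped_single_iff ctx_sum_ac add_ac elim: typed_cong)
  qed (use X in \<open>auto simp: ctx_sum_ac\<close>)
qed

lemma linear_subst_App_right:
  assumes "typed G t (Arr M L) m e s" "linear_subst F c D (M + {#N#}) m' e'"
  shows "linear_subst (\<lambda>r. App t (F r)) c (ctx_sum G D) {#L#} (m + m' + 1) (e + e')"
proof -
  from assms(2) obtain X D' e0 where X: "X \<noteq> {#}" "D = ctx_sum D' (ctx_at c X)" "e' = e0 + size X"
    and subst: "\<And>H r mr er sr. mtyped H r X mr er sr \<Longrightarrow>
      \<exists>s. mtyped (ctx_sum D' H) (F r) (M + {#N#}) (m' + mr) (e0 + er) s"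
    by (elim linear_subst_nonemptyE) simp_all
  show ?thesis
  proof (rule linear_substI[where X = X and G' = "ctx_sum G D'" and e' = "e + e0"])
    fix H r mr er sr
    assume "mtyped H r X mr er sr"
    with subst obtain s' where "mtyped (ctx_sum D' H) (F r) (M + {#N#}) (m' + mr) (e0 + er) s'" by blast
    from app[OF assms(1) this]
    show "\<exists>s. mtyped (ctx_sum (ctx_sum G D') H) (App t (F r)) {#L#} (m + m' + 1 + mr) (e + e0 + er) s"
      by (auto simp: mtyped_single_iff ctx_sum_ac add_ac elim: typed_cong)
  qed (use X in \<open>auto simp: ctx_sum_ac\<close>)
qed

lemma linear_subst_ES_right:
  assumes "typed G t L m e s" "linear_subst F c D (G 0 + {#N#}) m' e'"
  shows "linear_subst (\<lambda>r. ES t (F r)) c (ctx_sum (ctx_tail G) D) {#L#} (m + m') (e + e')"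
proof -
  from assms(2) obtain X D' e0 where X: "X \<noteq> {#}" "D = ctx_sum D' (ctx_at c X)" "e' = e0 + size X"
    and subst: "\<And>H r mr er sr. mtyped H r X mr er sr \<Longrightarrow>
      \<exists>s. mtyped (ctx_sum D' H) (F r) (G 0 + {#N#}) (m' + mr) (e0 + er) s"
    by (elim linear_subst_nonemptyE) simp_all
  show ?thesis
  proof (rule linear_substI[where X = X and G' = "ctx_sum (ctx_tail G) D'" and e' = "e + e0"])
    fix H r mr er sr
    assume "mtyped H r X mr er sr"
    with subst obtain s' where "mtyped (ctx_sum D' H) (F r) (G 0 + {#N#}) (m' + mr) (e0 + er) s'" by blast
    from es[OF assms(1) this]
    show "\<exists>s. mtyped (ctx_sum (ctx_sum (ctx_tail G) D') H) (ES t (F r)) {#L#} (m + m' + mr) (e + e0 + er) s"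
      by (auto simp: mtyped_single_iff ctx_sum_ac add_ac elim: typed_cong)
  qed (use X in \<open>auto simp: ctx_sum_ac\<close>)
qed

lemma linear_subst_ES_left:
  assumes "linear_subst F (Suc c) G {#L#} m e" "mtyped D u (G 0 + {#N#}) m' e' s'"
  shows "linear_subst (\<lambda>r. ES (F (lift 1 0 r)) u) c (ctx_sum (ctx_tail G) D) {#L#} (m + m') (e + e')"
proof -
  from assms(1) obtain X G' e0 where X: "X \<noteq> {#}" "G = ctx_sum G' (ctx_at (Suc c) X)" "e = e0 + size X"
    and subst: "\<And>H r mr er sr. mtyped H r X mr er sr \<Longrightarrow>
      \<exists>s. mtyped (ctx_sum G' H) (F r) {#L#} (m + mr) (e0 + er) s"
    by (elim linear_subst_nonemptyE) simp_all
  show ?thesis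
  proof (rule linear_substI[where X = X and G' = "ctx_sum (ctx_tail G') D" and e' = "e0 + e'"])
    fix H r mr er sr
    assume "mtyped H r X mr er sr"
    from subst[OF typed_lift(2)[OF this, of 1 0]] obtain s where
      "typed (ctx_sum G' (ctx_shift 1 0 H)) (F (lift 1 0 r)) L (m + mr) (e0 + er) s"
      by (auto simp: mtyped_single_iff)
    moreover from assms(2) X(2) have "mtyped D u (ctx_sum G' (ctx_shift 1 0 H) 0 + {#N#}) m' e' s'"
      by (simp add: ctx_sum_apply ctx_shift_1_0 ctx_at_Suc_0)
    ultimately show "\<exists>s. mtyped (ctx_sum (ctx_sum (ctx_tail G') D) H) (ES (F (lift 1 0 r)) u) {#L#}
        (m + m' + mr) (e0 + e' + er) s"
      using es by (fastforce simp: mtyped_single_iff ctx_tail_sum ctx_tail_shift_1 ctx_sum_ac add_ac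
          elim: typed_cong)
  qed (use X in \<open>auto simp: ctx_sum_ac ctx_tail_sum ctx_tail_at\<close>)
qed

lemma linear_subst_plugW_var:
  assumes "typed G (plugW W (Var (depthW W + c))) L m e s"
  shows "linear_subst (\<lambda>r. plugW W (lift (depthW W) 0 r)) c G {#L#} m e"
  using assms
proof (induction W arbitrary: c G L m e s)
  case Hole
  then have "G = ctx_single c L" "m = 0" "e = 1" by (auto elim: typed_VarE)
  then show ?case
    by (intro linear_substI[where X = "{#L#}" and G' = ctx_empty and e' = 0]) (auto simp: ctx_at_single)
next
  case (AppL W u)
  then obtain G1 D M m1 e1 s1 m2 e2 s2 where "G = ctx_sum G1 D" "m = m1 + m2 + 1" "e = e1 + e2"
    and "typed G1 (plugW W (Var (depthW W + c))) (Arr M L) m1 e1 s1" "mtyped D u (M + {#N#}) m2 e2 s2"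
    by (auto elim: typed_AppE)
  with linear_subst_App_left[OF AppL.IH] show ?case by simp
next
  case (AppR t W)
  then obtain G1 D M m1 e1 s1 m2 e2 s2 where "G = ctx_sum G1 D" "m = m1 + m2 + 1" "e = e1 + e2"
    and "typed G1 t (Arr M L) m1 e1 s1" "mtyped D (plugW W (Var (depthW W + c))) (M + {#N#}) m2 e2 s2"
    by (auto elim: typed_AppE)
  with linear_subst_App_right linear_subst_mtyped[OF _ AppR.IH] show ?case by simp
next
  case (ESR t W)
  then obtain G1 D m1 e1 s1 m2 e2 s2 where "G = ctx_sum (ctx_tail G1) D" "m = m1 + m2" "e = e1 + e2"
    and "typed G1 t L m1 e1 s1" "mtyped D (plugW W (Var (depthW W + c))) (G1 0 + {#N#}) m2 e2 s2"
    by (auto elim: typed_ESE)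
  with linear_subst_ES_right linear_subst_mtyped[OF _ ESR.IH] show ?case by simp
next
  case (ESL W u)
  then obtain G1 D m1 e1 s1 m2 e2 s2 where "G = ctx_sum (ctx_tail G1) D" "m = m1 + m2" "e = e1 + e2"
    and "typed G1 (plugW W (Var (depthW W + Suc c))) L m1 e1 s1" "mtyped D u (G1 0 + {#N#}) m2 e2 s2"
    by (auto elim: typed_ESE)
  with linear_subst_ES_left[OF ESL.IH] show ?case by (simp add: lift_lift)
qed

section \<open>Subject reduction\<close>

lemma mtyped_step:
  assumes step: "\<And>G L m e s. typed G t L m e s \<Longrightarrow>
      \<exists>m' e' s'. typed G t' L m' e' s' \<and> R m e s m' e' s'"
    and R_add: "\<And>a b c a' b' c' x y z x' y' z'. R a b c a' b' c' \<Longrightarrow> R x y z x' y' z' \<Longrightarrow>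
      R (a + x) (b + y) (c + z) (a' + x') (b' + y') (c' + z')"
    and "mtyped G t M m e s" "M \<noteq> {#}"
  shows "\<exists>m' e' s'. mtyped G t' M m' e' s' \<and> R m e s m' e' s'"
  using assms(3,4)
proof (induction rule: mtyped_induct)
  case empty
  then show ?case by simp
next
  case (add G L m e s D M m' e' s')
  from step[OF add.hyps(1)] obtain m1 e1 s1 where
    head: "typed G t' L m1 e1 s1" "R m e s m1 e1 s1"
    by blast
  show ?case
  proof (cases "M = {#}")
    case True
    with add.hyps(2) have "D = ctx_empty" "m' = 0" "e' = 0" "s' = 0"
      by (auto simp: mtyped_empty_iff)
    with many_add[OF head(1) many_empty] head(2) True show ?thesis by auto
  next
    case False
    with add.IH obtain m2 e2 s2 where "mtyped D t' M m2 e2 s2" "R m' e' s' m2 e2 s2"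
      by blast
    with many_add[OF head(1) this(1)] R_add[OF head(2) this(2)] show ?thesis by blast
  qed
qed

lemma typed_plugW_step:
  assumes step: "\<And>G L m e s. typed G t L m e s \<Longrightarrow>
      \<exists>m' e' s'. typed G t' L m' e' s' \<and> R m e s m' e' s'"
    and R_add: "\<And>a b c a' b' c' x y z x' y' z'. R a b c a' b' c' \<Longrightarrow> R x y z x' y' z' \<Longrightarrow>
      R (a + x) (b + y) (c + z) (a' + x') (b' + y') (c' + z')"
    and R_shift: "\<And>a b c a' b' c' x y z. R a b c a' b' c' \<Longrightarrow>
      R (a + x) (b + y) (c + z) (a' + x) (b' + y) (c' + z)"
    and "typed G (plugW W t) L m e s"
  shows "\<exists>m' e' s'. typed G (plugW W t') L m' e' s' \<and> R m e s m' e' s'"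
  using assms(4)
proof (induction W arbitrary: G L m e s)
  case Hole
  then show ?case using step by simp
next
  case (AppL W u)
  then obtain G1 D M m1 e1 s1 m2 e2 s2 where
    G: "G = ctx_sum G1 D" "m = m1 + m2 + 1" "e = e1 + e2" "s = s1 + s2 + 1"
    and fun_typed: "typed G1 (plugW W t) (Arr M L) m1 e1 s1"
    and arg_typed: "mtyped D u (M + {#N#}) m2 e2 s2"
    by (auto elim: typed_AppE)
  from AppL.IH[OF fun_typed] obtain m' e' s' where
    "typed G1 (plugW W t') (Arr M L) m' e' s'" "R m1 e1 s1 m' e' s'"
    by blast
  from app[OF this(1) arg_typed] R_shift[OF this(2), of "m2 + 1" e2 "s2 + 1"] G show ?case
    by (auto simp: add_ac)
next
  case (AppR u W)
  then obtain G1 D M m1 e1 s1 m2 e2 s2 where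
    G: "G = ctx_sum G1 D" "m = m1 + m2 + 1" "e = e1 + e2" "s = s1 + s2 + 1"
    and fun_typed: "typed G1 u (Arr M L) m1 e1 s1"
    and arg_typed: "mtyped D (plugW W t) (M + {#N#}) m2 e2 s2"
    by (auto elim: typed_AppE)
  from mtyped_step[where R = R, OF AppR.IH R_add arg_typed] obtain m' e' s' where
    "mtyped D (plugW W t') (M + {#N#}) m' e' s'" "R m2 e2 s2 m' e' s'"
    by auto
  from app[OF fun_typed this(1)] R_shift[OF this(2), of "m1 + 1" e1 "s1 + 1"] G show ?case
    by (auto simp: add_ac)
next
  case (ESR u W)
  then obtain G1 D m1 e1 s1 m2 e2 s2 where
    G: "G = ctx_sum (ctx_tail G1) D" "m = m1 + m2" "e = e1 + e2" "s = s1 + s2 + 1"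
    and body_typed: "typed G1 u L m1 e1 s1"
    and arg_typed: "mtyped D (plugW W t) (G1 0 + {#N#}) m2 e2 s2"
    by (auto elim: typed_ESE)
  from mtyped_step[where R = R, OF ESR.IH R_add arg_typed] obtain m' e' s' where
    "mtyped D (plugW W t') (G1 0 + {#N#}) m' e' s'" "R m2 e2 s2 m' e' s'"
    by auto
  from es[OF body_typed this(1)] R_shift[OF this(2), of m1 e1 "s1 + 1"] G show ?case
    by (auto simp: add_ac)
next
  case (ESL W u)
  then obtain G1 D m1 e1 s1 m2 e2 s2 where
    G: "G = ctx_sum (ctx_tail G1) D" "m = m1 + m2" "e = e1 + e2" "s = s1 + s2 + 1"
    and body_typed: "typed G1 (plugW W t) L m1 e1 s1"
    and arg_typed: "mtyped D u (G1 0 + {#N#}) m2 e2 s2"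
    by (auto elim: typed_ESE)
  from ESL.IH[OF body_typed] obtain m' e' s' where
    "typed G1 (plugW W t') L m' e' s'" "R m1 e1 s1 m' e' s'"
    by blast
  from es[OF this(1) arg_typed] R_shift[OF this(2), of m2 e2 "s2 + 1"] G show ?case
    by (auto simp: add_ac)
qed

lemma root_m_typed:
  assumes "root_m t t'" "typed G t L m e s"
  shows "\<exists>m' e' s'. typed G t' L m' e' s' \<and> m' < m \<and> e' = e"
proof -
  from assms(1) obtain S b u where
    "t = App (plugS S (Lam b)) u" "t' = plugS S (ES b (lift (length S) 0 u))"
    by cases
  with assms(2) obtain G1 D M m1 e1 s1 m2 e2 s2 where "G = ctx_sum G1 D" "m = m1 + m2 + 1" "e = e1 + e2"
    "typed G1 (plugS S (Lam b)) (Arr M L) m1 e1 s1" "mtyped D u (M + {#N#}) m2 e2 s2"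
    by (auto elim: typed_AppE)
  with typed_plugS_distant_beta \<open>t' = _\<close> show ?thesis by fastforce
qed

lemma root_e_typed:
  assumes "root_e t t'" "typed G t L m e s"
  shows "\<exists>m' e' s'. typed G t' L m' e' s' \<and> m' = m \<and> e' < e"
proof -
  from assms(1) obtain W u where
    t: "t = ES (plugW W (Var (depthW W))) u" "t' = ES (plugW W (lift (Suc (depthW W)) 0 u)) u"
    by cases
  with assms(2) obtain G1 D m1 e1 s1 m2 e2 s2 where
    G: "G = ctx_sum (ctx_tail G1) D" "m = m1 + m2" "e = e1 + e2"
    and body_typed: "typed G1 (plugW W (Var (depthW W + 0))) L m1 e1 s1"
    and arg_typed: "mtyped D u (G1 0 + {#N#}) m2 e2 s2"
    by (auto elim: typed_ESE)
  from linear_subst_plugW_var[OF body_typed] obtain X G1' e1' where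
    X: "X \<noteq> {#}" "G1 = ctx_sum G1' (ctx_at 0 X)" "e1 = e1' + size X"
    and subst: "\<And>H r mr er sr. mtyped H r X mr er sr \<Longrightarrow>
      \<exists>s. mtyped (ctx_sum G1' H) (plugW W (lift (depthW W) 0 r)) {#L#} (m1 + mr) (e1' + er) s"
    by (elim linear_subst_nonemptyE) simp_all
  \<comment> \<open>\<open>X\<close> is consumed by the hole, the rest of the argument's type stays with the substitution.\<close>
  from arg_typed X(2) have "mtyped D u (X + (G1' 0 + {#N#})) m2 e2 s2"
    by (simp add: ctx_sum_apply ctx_at_def add_ac)
  then obtain Dx Dr mx mr ex er sx sr where
    "mtyped Dx u X mx ex sx" and rest_typed: "mtyped Dr u (G1' 0 + {#N#}) mr er sr"
    and D: "D = ctx_sum Dx Dr" "m2 = mx + mr" "e2 = ex + er"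
    by (rule mtyped_split)
  from subst[OF typed_lift(2)[OF this(1), of 1 0]] obtain s' where
    "typed (ctx_sum G1' (ctx_shift 1 0 Dx)) (plugW W (lift (Suc (depthW W)) 0 u)) L (m1 + mx) (e1' + ex) s'"
    by (auto simp: mtyped_single_iff lift_lift)
  moreover from rest_typed have "mtyped Dr u (ctx_sum G1' (ctx_shift 1 0 Dx) 0 + {#N#}) mr er sr"
    by (simp add: ctx_sum_apply ctx_shift_1_0)
  ultimately have "typed (ctx_sum (ctx_tail (ctx_sum G1' (ctx_shift 1 0 Dx))) Dr) t' L
      (m1 + mx + mr) (e1' + ex + er) (s' + sr + 1)"
    unfolding t by (rule es)
  moreover from X(1) have "size X > 0"
    by (simp add: nonempty_has_size)
  ultimately show ?thesis
    using G X D by (auto simp: ctx_tail_sum ctx_tail_shift_1 ctx_tail_at_0 ctx_sum_ac add_ac)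
qed

lemma root_gcv_typed:
  assumes "root_gcv t t'" "typed G t L m e s"
  shows "\<exists>m' e' s'. typed G t' L m' e' s' \<and> m' = m \<and> e' = e \<and> s' < s"
proof -
  from assms(1) obtain b v S where "\<not> occurs_free 0 b" "is_value v"
    "t = ES b (plugS S v)" "t' = plugS S (lift (length S) 0 (lower 0 b))"
    by cases
  moreover from \<open>is_value v\<close> obtain b' where "v = Lam b'"
    by (cases v) auto
  ultimately obtain G1 D m1 e1 s1 m2 e2 s2 where
    G: "G = ctx_sum (ctx_tail G1) D" "m = m1 + m2" "e = e1 + e2" "s = s1 + s2 + 1"
    and body_typed: "typed G1 b L m1 e1 s1"
    and value_typed: "mtyped D (plugS S (Lam b')) (G1 0 + {#N#}) m2 e2 s2"
    using assms(2) by (auto elim: typed_ESE)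
  from typed_ctx_not_free(1)[OF body_typed \<open>\<not> occurs_free 0 b\<close>] value_typed
  have "typed D (plugS S (Lam b')) N m2 e2 s2"
    by (simp add: mtyped_single_iff)
  moreover from typed_lower(1)[OF body_typed \<open>\<not> occurs_free 0 b\<close>]
  have "typed (ctx_tail G1) (lower 0 b) L m1 e1 s1"
    by (simp add: ctx_lower_0)
  ultimately show ?thesis
    using typed_plugS_value_gc G \<open>t' = _\<close> by fastforce
qed

lemma wm_typed:
  assumes "wm t u" "typed G t L m e s"
  shows "\<exists>m' e' s'. typed G u L m' e' s' \<and> m' < m \<and> e' = e"
proof -
  from assms(1) obtain W r r' where t: "t = plugW W r" "u = plugW W r'" and "root_m r r'"
    by cases
  show ?thesis
    unfolding t by (rule typed_plugW_step[OF root_m_typed[OF \<open>root_m r r'\<close>]]) (use assms t in auto)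
qed

lemma we_typed:
  assumes "we t u" "typed G t L m e s"
  shows "\<exists>m' e' s'. typed G u L m' e' s' \<and> m' = m \<and> e' < e"
proof -
  from assms(1) obtain W r r' where t: "t = plugW W r" "u = plugW W r'" and "root_e r r'"
    by cases
  show ?thesis
    unfolding t by (rule typed_plugW_step[OF root_e_typed[OF \<open>root_e r r'\<close>]]) (use assms t in auto)
qed

lemma wgcv_typed:
  assumes "wgcv t u" "typed G t L m e s"
  shows "\<exists>m' e' s'. typed G u L m' e' s' \<and> m' = m \<and> e' = e \<and> s' < s"
proof -
  from assms(1) obtain W r r' where t: "t = plugW W r" "u = plugW W r'" and "root_gcv r r'"
    by cases
  show ?thesis
    unfolding t by (rule typed_plugW_step[OF root_gcv_typed[OF \<open>root_gcv r r'\<close>]]) (use assms t in auto)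
qed

theorem proposition6p1:
  assumes "typed G t L m e s"
  shows "(wm t u \<longrightarrow> m \<ge> 1 \<and> (\<exists>m' s'. typed G u L m' e s' \<and> m > m'))
       \<and> (we t u \<longrightarrow> e \<ge> 1 \<and> (\<exists>e' s'. typed G u L m e' s' \<and> e > e'))
       \<and> (wgcv t u \<longrightarrow> (\<exists>s'. typed G u L m e s' \<and> s > s'))"
  using wm_typed[OF _ assms] we_typed[OF _ assms] wgcv_typed[OF _ assms] by fastforce

end
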